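(* For every integer $n\ge 1$, the spiral $\mathcal S_5^n$ is upper embeddable, i.e. $\gamma_M(\mathcal S_5^n)=\lfloor (n+1)/2\rfloor$. Furthermore, $\gamma_M(\mathcal S_5^n-v_{2n+3})=\gamma_M(\mathcal S_5^n)-1$, i.e. $v_{2n+3}$ is a 1-critical-vertex of $\mathcal S_5^n$.
   Context: Spiral $\mathcal S_m^n$ ($m\ge3$, $n\ge1$): the graph on vertices $v_1,\dots,v_{m+2n}$ which is the union of $p_0,p_1,\dots,p_n$, where $p_0$ is the $m$-cycle $v_1v_2\cdots v_mv_1$; for $1\le i\le m-1$, $p_i$ is the path $v_{m+2i-2}v_{m+2i-1}v_{m+2i}v_i$ (3 edges, with new internal vertices $v_{m+2i-1},v_{m+2i}$); and for $i>m-1$, $p_i$ is the path $v_{m+2i-2}v_{m+2i-1}v_{m+2i}v_{2i-m+1}$ (with new internal vertices $v_{m+2i-1},v_{m+2i}$). Its Betti number is $\beta=|E|-|V|+1=n+1$. $\gamma_M(H)$ is the maximum genus of a connected graph $H$ (largest $k$ such that $H$ embeds cellularly in the orientable surface of genus $k$); $H$ is upper embeddable if $\gamma_M(H)=\lfloor\beta(H)/2\rfloor$. A vertex $v$ is a 1-critical-vertex of $G$ if $G-v$ is connected and $\gamma_M(G-v)=\gamma_M(G)-1$. *)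

theory Defs
  imports Main
begin

type_synonym 'a graph = "'a set \<times> 'a set set"

definition verts :: "'a graph \<Rightarrow> 'a set" where "verts G = fst G"
definition edges :: "'a graph \<Rightarrow> 'a set set" where "edges G = snd G"

definition simple_graph :: "'a graph \<Rightarrow> bool" where
  "simple_graph G \<longleftrightarrow> finite (verts G) \<and>
     (\<forall>e\<in>edges G. card e = 2 \<and> e \<subseteq> verts G)"

definition nbrs :: "'a graph \<Rightarrow> 'a \<Rightarrow> 'a set" where
  "nbrs G u = {v. {u, v} \<in> edges G}"

definition connected_graph :: "'a graph \<Rightarrow> bool" where
  "connected_graph G \<longleftrightarrow> verts G \<noteq> {} \<and>
     (\<forall>u\<in>verts G. \<forall>v\<in>verts G. (u, v) \<in> {(x, y). {x, y} \<in> edges G}\<^sup>*)"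

definition delete_vertex :: "'a graph \<Rightarrow> 'a \<Rightarrow> 'a graph" where
  "delete_vertex G v = (verts G - {v}, {e \<in> edges G. v \<notin> e})"

definition betti :: "'a graph \<Rightarrow> int" where
  "betti G = int (card (edges G)) - int (card (verts G)) + 1"

text \<open>Orientable cellular embeddings, combinatorially: rotation systems
  (Heffter--Edmonds). A rotation assigns to every vertex u a cyclic permutation
  of its neighbours.\<close>
definition rotation_system :: "'a graph \<Rightarrow> ('a \<Rightarrow> 'a \<Rightarrow> 'a) \<Rightarrow> bool" where
  "rotation_system G \<rho> \<longleftrightarrow> (\<forall>u\<in>verts G.
      bij_betw (\<rho> u) (nbrs G u) (nbrs G u) \<and>
      (\<forall>x\<in>nbrs G u. \<forall>y\<in>nbrs G u. \<exists>k. (\<rho> u ^^ k) x = y))"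

definition darts :: "'a graph \<Rightarrow> ('a \<times> 'a) set" where
  "darts G = {(u, v). {u, v} \<in> edges G}"

definition face_step :: "('a \<Rightarrow> 'a \<Rightarrow> 'a) \<Rightarrow> 'a \<times> 'a \<Rightarrow> 'a \<times> 'a" where
  "face_step \<rho> d = (snd d, \<rho> (snd d) (fst d))"

definition num_faces :: "'a graph \<Rightarrow> ('a \<Rightarrow> 'a \<Rightarrow> 'a) \<Rightarrow> nat" where
  "num_faces G \<rho> = card ((\<lambda>d. {(face_step \<rho> ^^ k) d | k. True}) ` darts G)"

text \<open>G embeds cellularly in the orientable surface of genus g via rotation \<rho>
  (Euler's formula V - E + F = 2 - 2g).\<close>
definition embeds_with_genus :: "'a graph \<Rightarrow> nat \<Rightarrow> bool" where
  "embeds_with_genus G g \<longleftrightarrow> (\<exists>\<rho>. rotation_system G \<rho> \<and>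
     int (card (verts G)) - int (card (edges G)) + int (num_faces G \<rho>) = 2 - 2 * int g)"

definition max_genus :: "'a graph \<Rightarrow> nat" where
  "max_genus G = Max {g. embeds_with_genus G g}"

definition upper_embeddable :: "'a graph \<Rightarrow> bool" where
  "upper_embeddable G \<longleftrightarrow> int (max_genus G) = betti G div 2"

definition one_critical_vertex :: "'a graph \<Rightarrow> 'a \<Rightarrow> bool" where
  "one_critical_vertex G v \<longleftrightarrow> v \<in> verts G \<and> connected_graph (delete_vertex G v) \<and>
     int (max_genus (delete_vertex G v)) = int (max_genus G) - 1"

definition spiral_end :: "nat \<Rightarrow> nat \<Rightarrow> nat" where
  "spiral_end m i = (if i \<le> m - 1 then i else 2 * i - m + 1)"

definition spiral :: "nat \<Rightarrow> nat \<Rightarrow> nat graph" where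
  "spiral m n = ({1..m + 2 * n},
     {{i, i + 1} | i. 1 \<le> i \<and> i < m} \<union> {{m, 1}} \<union>
     (\<Union>i\<in>{1..n}. {{m + 2 * i - 2, m + 2 * i - 1}, {m + 2 * i - 1, m + 2 * i},
                   {m + 2 * i, spiral_end m i}}))"

end

theory Submission
  imports Defs "HOL-Combinatorics.Cycles"
begin

definition traj :: "('a \<Rightarrow> 'a) \<Rightarrow> 'a \<Rightarrow> 'a set" where
  "traj f x = range (\<lambda>k. (f ^^ k) x)"

lemma traj_iff: "y \<in> traj f x \<longleftrightarrow> (\<exists>k. (f ^^ k) x = y)"
  unfolding traj_def by auto

lemma self_in_traj: "x \<in> traj f x"
  unfolding traj_iff by (metis funpow_0)

lemma step_in_traj: "f x \<in> traj f x"
  unfolding traj_iff by (rule exI[of _ 1]) simp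

lemma traj_trans: "y \<in> traj f x \<Longrightarrow> z \<in> traj f y \<Longrightarrow> z \<in> traj f x"
  unfolding traj_iff by (metis funpow_add comp_apply)

lemma traj_sym:
  assumes "permutation p" "y \<in> traj p x"
  shows "x \<in> traj p y"
proof -
  obtain n where n: "p ^^ n = id" "n > 0" using assms(1) by (rule permutation_is_nilpotent)
  obtain k where k: "(p ^^ k) x = y" using assms(2) unfolding traj_iff by blast
  have "(p ^^ (n * k - k)) y = (p ^^ (n * k - k + k)) x"
    using k by (simp add: funpow_add)
  also have "n * k - k + k = n * k" using n(2) by (cases n) auto
  also have "p ^^ (n * k) = id" by (induct k) (simp_all add: n(1) funpow_add)
  finally show ?thesis unfolding traj_iff by auto
qed

lemma traj_eq:
  assumes "permutation p" "y \<in> traj p x"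
  shows "traj p y = traj p x"
  using traj_trans[OF assms(2)] traj_trans[OF traj_sym[OF assms]] by blast

lemma card_traj_image_le:
  assumes "permutation p" "finite R" "\<forall>x\<in>S. \<exists>r\<in>R. r \<in> traj p x"
  shows "card (traj p ` S) \<le> card R"
proof -
  have "traj p ` S \<subseteq> traj p ` R"
    using assms(3) traj_eq[OF assms(1)] by blast
  then have "card (traj p ` S) \<le> card (traj p ` R)" using assms(2) by (simp add: card_mono)
  also have "\<dots> \<le> card R" using card_image_le[OF assms(2)] .
  finally show ?thesis .
qed

lemma sign_cycle_of_list:
  "distinct cs \<Longrightarrow> cs \<noteq> [] \<Longrightarrow> sign (cycle_of_list cs) = (-1) ^ (length cs - 1)"
proof (induct cs rule: cycle_of_list.induct)
  case (1 i j cs)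
  have "sign (cycle_of_list (i # j # cs)) = sign (transpose i j) * sign (cycle_of_list (j # cs))"
    unfolding cycle_of_list.simps by (rule sign_compose[OF permutation_swap_id permutation_of_cycle])
  also have "\<dots> = - ((-1) ^ length cs)"
    using 1 by (simp add: sign_swap_id del: cycle_of_list.simps)
  finally show ?case by (simp del: cycle_of_list.simps)
next
  case "2_1" then show ?case by simp
next
  case "2_2" then show ?case by simp
qed

lemma traj_cycle_of_list:
  assumes "distinct cs" "x \<in> set cs"
  shows "traj (cycle_of_list cs) x = set cs"
proof -
  obtain i where i: "i < length cs" "cs ! i = x" using assms(2) by (auto simp: in_set_conv_nth)
  have it: "(cycle_of_list cs ^^ n) x = cs ! ((i + n) mod length cs)" for n
  proof -
    have "(cycle_of_list cs ^^ n) x = map (cycle_of_list cs ^^ n) cs ! i" using i by simp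
    also have "\<dots> = rotate n cs ! i" using cyclic_rotation[OF assms(1)] by simp
    also have "\<dots> = cs ! ((i + n) mod length cs)" using i by (simp add: nth_rotate add.commute)
    finally show ?thesis .
  qed
  show ?thesis
  proof
    have "length cs > 0" using i(1) by linarith
    then show "traj (cycle_of_list cs) x \<subseteq> set cs"
      unfolding traj_def it by (auto simp del: cycle_of_list.simps)
    show "set cs \<subseteq> traj (cycle_of_list cs) x"
    proof
      fix y assume "y \<in> set cs"
      then obtain j where j: "j < length cs" "cs ! j = y" by (auto simp: in_set_conv_nth)
      have "(i + (j + length cs - i)) mod length cs = j" using i j by simp
      then show "y \<in> traj (cycle_of_list cs) x" unfolding traj_iff it using j by metis
    qed
  qed
qed

lemma traj_subset:
  assumes "p permutes I" "x \<in> I"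
  shows "traj p x \<subseteq> I"
  unfolding traj_def using permutes_in_image[OF permutes_funpow[OF assms(1)]] assms(2) by auto

lemma traj_cycle_comp:
  assumes p: "p permutes I" and cs: "distinct cs" "set cs \<inter> I = {}"
  shows "x \<in> I \<Longrightarrow> traj (cycle_of_list cs \<circ> p) x = traj p x"
    and "x \<in> set cs \<Longrightarrow> traj (cycle_of_list cs \<circ> p) x = set cs"
proof -
  let ?c = "cycle_of_list cs"
  have c_fix: "?c y = y" if "y \<in> I" for y
    using cs(2) that by (intro id_outside_supp) blast
  show "traj (?c \<circ> p) x = traj p x" if x: "x \<in> I"
  proof -
    have "((?c \<circ> p) ^^ k) x = (p ^^ k) x" for k
    proof (induct k)
      case (Suc k)
      have "p ((p ^^ k) x) \<in> I" using permutes_in_image[OF permutes_funpow[OF p]] p x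
        by (metis funpow_simps_right(2) o_apply)
      then show ?case using Suc by (simp add: c_fix)
    qed simp
    then show ?thesis unfolding traj_def by simp
  qed
  show "traj (?c \<circ> p) x = set cs" if x: "x \<in> set cs"
  proof -
    have "((?c \<circ> p) ^^ k) x = (?c ^^ k) x" for k
    proof (induct k)
      case (Suc k)
      have "(?c ^^ k) x \<in> set cs"
        using x by (simp only: permutes_in_image[OF permutes_funpow[OF cycle_permutes[of cs]]])
      then have "p ((?c ^^ k) x) = (?c ^^ k) x" using cs(2) p by (simp add: permutes_not_in disjoint_iff)
      then show ?case using Suc by simp
    qed simp
    then show ?thesis using traj_cycle_of_list[OF cs(1) x] unfolding traj_def by simp
  qed
qed

lemma sign_cycle_decomp:
  "cycle_decomp I p \<Longrightarrow> p permutes I \<and> finite I \<and> sign p = (-1) ^ (card I + card (traj p ` I))"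
proof (induct rule: cycle_decomp.induct)
  case (comp I p cs)
  let ?c = "cycle_of_list cs"
  have p: "p permutes I" and fin: "finite I" and sign_p: "sign p = (-1) ^ (card I + card (traj p ` I))"
    using comp(2) by blast+
  have perm: "?c \<circ> p permutes set cs \<union> I"
    using permutes_compose[OF permutes_subset[OF p] permutes_subset[OF cycle_permutes]] by blast
  have "finite (set cs \<union> I)" using fin by simp
  show ?case
  proof (cases "cs = []")
    case True
    then show ?thesis using comp(2) perm \<open>finite (set cs \<union> I)\<close> by simp
  next
    case False
    have "traj (?c \<circ> p) ` set cs = (\<lambda>_. set cs) ` set cs"
      using traj_cycle_comp(2)[OF p comp(3,4)] by simp
    moreover have "traj (?c \<circ> p) ` I = traj p ` I"
      using traj_cycle_comp(1)[OF p comp(3,4)] by simp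
    ultimately have img: "traj (?c \<circ> p) ` (set cs \<union> I) = insert (set cs) (traj p ` I)"
      using False by (simp add: image_Un image_constant_conv)
    have "set cs \<notin> traj p ` I"
    proof
      assume "set cs \<in> traj p ` I"
      then have "set cs \<subseteq> I" using traj_subset[OF p] by blast
      then show False using comp(4) False by (simp add: Int_absorb2)
    qed
    then have card_img: "card (traj (?c \<circ> p) ` (set cs \<union> I)) = Suc (card (traj p ` I))"
      using img fin by simp
    have card_I: "card (set cs \<union> I) = length cs + card I"
      using comp(3,4) fin by (simp add: card_Un_disjoint distinct_card)
    obtain m where m: "length cs = Suc m" using False by (cases cs) auto
    have "sign (?c \<circ> p) = sign ?c * sign p"
      using fin p permutation_permutes by (blast intro: sign_compose permutation_of_cycle)
    also have "\<dots> = (-1) ^ (card (set cs \<union> I) + card (traj (?c \<circ> p) ` (set cs \<union> I)))"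
      using sign_cycle_of_list[OF comp(3) False] sign_p m card_img card_I by (simp add: power_add)
    finally show ?thesis using perm \<open>finite (set cs \<union> I)\<close> by blast
  qed
qed (simp add: permutes_id id_def)

lemma sign_eq_traj_count:
  assumes "p permutes S" "finite S"
  shows "sign p = (-1) ^ (card S + card (traj p ` S))"
  using sign_cycle_decomp[OF cycle_decomposition[OF assms]] by blast

definition cyclic_perm_on :: "'a set \<Rightarrow> ('a \<Rightarrow> 'a) \<Rightarrow> bool" where
  "cyclic_perm_on N f \<longleftrightarrow> bij_betw f N N \<and> (\<forall>x\<in>N. \<forall>y\<in>N. \<exists>k. (f ^^ k) x = y)"

lemma rotation_system_iff: "rotation_system G \<rho> \<longleftrightarrow> (\<forall>u\<in>verts G. cyclic_perm_on (nbrs G u) (\<rho> u))"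
  unfolding rotation_system_def cyclic_perm_on_def by blast

definition face_perm :: "'a graph \<Rightarrow> ('a \<Rightarrow> 'a \<Rightarrow> 'a) \<Rightarrow> 'a \<times> 'a \<Rightarrow> 'a \<times> 'a" where
  "face_perm G \<rho> d = (if d \<in> darts G then face_step \<rho> d else d)"
definition corner_perm :: "'a graph \<Rightarrow> ('a \<Rightarrow> 'a \<Rightarrow> 'a) \<Rightarrow> 'a \<times> 'a \<Rightarrow> 'a \<times> 'a" where
  "corner_perm G \<rho> d = (if d \<in> darts G then (fst d, \<rho> (fst d) (snd d)) else d)"
definition reverse_perm :: "'a graph \<Rightarrow> 'a \<times> 'a \<Rightarrow> 'a \<times> 'a" where
  "reverse_perm G d = (if d \<in> darts G then (snd d, fst d) else d)"

definition no_isolated :: "'a graph \<Rightarrow> bool" where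
  "no_isolated G \<longleftrightarrow> (\<forall>u\<in>verts G. nbrs G u \<noteq> {})"

lemma in_darts_iff: "(u, v) \<in> darts G \<longleftrightarrow> {u, v} \<in> edges G"
  unfolding darts_def by simp

lemma in_nbrs_iff: "v \<in> nbrs G u \<longleftrightarrow> {u, v} \<in> edges G"
  unfolding nbrs_def by simp

lemma darts_swap: "(u, v) \<in> darts G \<Longrightarrow> (v, u) \<in> darts G"
  unfolding darts_def by (simp add: insert_commute)

lemma dart_ends:
  assumes "simple_graph G" "(u, v) \<in> darts G"
  shows "u \<in> verts G" "v \<in> verts G" "u \<noteq> v"
  using assms unfolding simple_graph_def darts_def by (auto simp: card_2_iff)

lemma edge_doubletonE:
  assumes "simple_graph G" "e \<in> edges G"
  obtains u v where "e = {u, v}" "u \<noteq> v"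
proof -
  have "card e = 2" using assms unfolding simple_graph_def by blast
  then show ?thesis using that by (meson card_2_iff)
qed

lemma finite_darts: assumes "simple_graph G" shows "finite (darts G)"
proof -
  have "darts G \<subseteq> verts G \<times> verts G" using dart_ends[OF assms] by auto
  moreover have "finite (verts G)" using assms unfolding simple_graph_def by blast
  ultimately show ?thesis by (meson finite_SigmaI finite_subset)
qed

lemma cyclic_perm_on_in: "cyclic_perm_on N f \<Longrightarrow> x \<in> N \<Longrightarrow> f x \<in> N"
  unfolding cyclic_perm_on_def bij_betw_def by blast

lemma cyclic_perm_on_funpow_in: "cyclic_perm_on N f \<Longrightarrow> x \<in> N \<Longrightarrow> (f ^^ k) x \<in> N"
  by (induct k) (auto intro: cyclic_perm_on_in)

lemma reverse_perm_permutes: "reverse_perm G permutes darts G"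
proof (rule bij_imp_permutes)
  show "bij_betw (reverse_perm G) (darts G) (darts G)"
  proof (rule bij_betw_imageI)
    show "inj_on (reverse_perm G) (darts G)" unfolding inj_on_def reverse_perm_def by auto
    show "reverse_perm G ` darts G = darts G"
    proof
      show "reverse_perm G ` darts G \<subseteq> darts G" unfolding reverse_perm_def by (auto dest: darts_swap)
      show "darts G \<subseteq> reverse_perm G ` darts G"
      proof
        fix d assume d: "d \<in> darts G"
        obtain u v where uv: "d = (u, v)" by fastforce
        have "(v, u) \<in> darts G" using d uv darts_swap by simp
        moreover have "reverse_perm G (v, u) = d" using calculation uv unfolding reverse_perm_def by simp
        ultimately show "d \<in> reverse_perm G ` darts G" by (metis image_eqI)
      qed
    qed
  qed
  show "reverse_perm G x = x" if "x \<notin> darts G" for x using that unfolding reverse_perm_def by simp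
qed

lemma corner_perm_permutes:
  assumes G: "simple_graph G" and R: "rotation_system G \<rho>"
  shows "corner_perm G \<rho> permutes darts G"
proof (rule bij_imp_permutes)
  have rot: "cyclic_perm_on (nbrs G u) (\<rho> u)" if "(u, v) \<in> darts G" for u v
  proof -
    have "u \<in> verts G" using dart_ends(1)[OF G that] .
    then show ?thesis using R unfolding rotation_system_iff by blast
  qed
  show "bij_betw (corner_perm G \<rho>) (darts G) (darts G)"
  proof (rule bij_betw_imageI)
    show "inj_on (corner_perm G \<rho>) (darts G)"
    proof (rule inj_onI)
      fix d e assume d: "d \<in> darts G" and e: "e \<in> darts G" and eq: "corner_perm G \<rho> d = corner_perm G \<rho> e"
      obtain u v where uv: "d = (u, v)" by fastforce
      obtain u' v' where uv': "e = (u', v')" by fastforce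
      have u: "u = u'" and r: "\<rho> u v = \<rho> u v'" using eq d e uv uv' unfolding corner_perm_def by auto
      have "inj_on (\<rho> u) (nbrs G u)" using rot[of u v] d uv unfolding cyclic_perm_on_def bij_betw_def by blast
      moreover have "v \<in> nbrs G u" "v' \<in> nbrs G u" using d e uv uv' u
        by (auto simp: in_darts_iff in_nbrs_iff)
      ultimately have "v = v'" using r by (meson inj_onD)
      then show "d = e" using uv uv' u by simp
    qed
    show "corner_perm G \<rho> ` darts G = darts G"
    proof
      show "corner_perm G \<rho> ` darts G \<subseteq> darts G"
      proof
        fix d' assume "d' \<in> corner_perm G \<rho> ` darts G"
        then obtain u v where d: "(u, v) \<in> darts G" and d': "d' = corner_perm G \<rho> (u, v)" by auto
        have "v \<in> nbrs G u" using d by (simp add: in_darts_iff in_nbrs_iff)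
        then have "\<rho> u v \<in> nbrs G u" using cyclic_perm_on_in[OF rot[OF d]] by blast
        then show "d' \<in> darts G" using d d' unfolding corner_perm_def by (simp add: in_darts_iff in_nbrs_iff)
      qed
      show "darts G \<subseteq> corner_perm G \<rho> ` darts G"
      proof
        fix d assume d: "d \<in> darts G"
        obtain u w where uw: "d = (u, w)" by fastforce
        have w: "w \<in> nbrs G u" using d uw by (simp add: in_darts_iff in_nbrs_iff)
        have "\<rho> u ` nbrs G u = nbrs G u" using rot[of u w] d uw unfolding cyclic_perm_on_def bij_betw_def by blast
        then obtain v where v: "v \<in> nbrs G u" "\<rho> u v = w" using w by (metis imageE)
        have "(u, v) \<in> darts G" using v by (simp add: in_darts_iff in_nbrs_iff)
        moreover have "corner_perm G \<rho> (u, v) = d" using calculation v uw unfolding corner_perm_def by simp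
        ultimately show "d \<in> corner_perm G \<rho> ` darts G" by (metis image_eqI)
      qed
    qed
  qed
  show "corner_perm G \<rho> x = x" if "x \<notin> darts G" for x using that unfolding corner_perm_def by simp
qed

lemma face_perm_eq_comp: "face_perm G \<rho> = corner_perm G \<rho> \<circ> reverse_perm G"
proof
  fix d :: "'a \<times> 'a"
  obtain u v where uv: "d = (u, v)" by fastforce
  show "face_perm G \<rho> d = (corner_perm G \<rho> \<circ> reverse_perm G) d"
  proof (cases "d \<in> darts G")
    case True
    then have "(v, u) \<in> darts G" using uv darts_swap by simp
    then show ?thesis using True uv unfolding face_perm_def corner_perm_def reverse_perm_def face_step_def by simp
  next
    case False
    then show ?thesis unfolding face_perm_def corner_perm_def reverse_perm_def face_step_def by simp
  qed
qed

lemma face_perm_permutes: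
  assumes "simple_graph G" "rotation_system G \<rho>"
  shows "face_perm G \<rho> permutes darts G"
  unfolding face_perm_eq_comp by (rule permutes_compose[OF reverse_perm_permutes corner_perm_permutes[OF assms]])

lemma face_perm_funpow:
  assumes "simple_graph G" "rotation_system G \<rho>" "d \<in> darts G"
  shows "(face_perm G \<rho> ^^ k) d = (face_step \<rho> ^^ k) d"
proof (induct k)
  case 0 then show ?case by simp
next
  case (Suc k)
  have "(face_perm G \<rho> ^^ k) d \<in> darts G"
    using permutes_in_image[OF permutes_funpow[OF face_perm_permutes[OF assms(1,2)]]] assms(3) by blast
  then show ?case using Suc unfolding face_perm_def by simp
qed

lemma num_faces_eq_card_traj:
  assumes "simple_graph G" "rotation_system G \<rho>"
  shows "num_faces G \<rho> = card (traj (face_perm G \<rho>) ` darts G)"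
proof -
  have "(\<lambda>d. {(face_step \<rho> ^^ k) d | k. True}) ` darts G = traj (face_perm G \<rho>) ` darts G"
  proof (rule image_cong[OF refl])
    fix d assume "d \<in> darts G"
    then show "{(face_step \<rho> ^^ k) d | k. True} = traj (face_perm G \<rho>) d"
      unfolding traj_def using face_perm_funpow[OF assms] by auto
  qed
  then show ?thesis unfolding num_faces_def by simp
qed

definition edge_darts :: "'a set \<Rightarrow> ('a \<times> 'a) set" where
  "edge_darts e = {(u, v). {u, v} = e}"

lemma edge_darts_doubleton: "edge_darts {u, v} = {(u, v), (v, u)}"
  unfolding edge_darts_def by (auto simp: doubleton_eq_iff)

lemma darts_eq_Union_edge_darts: "darts G = (\<Union>e\<in>edges G. edge_darts e)"
  unfolding darts_def edge_darts_def by auto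

lemma inj_on_edge_darts:
  assumes "simple_graph G"
  shows "inj_on edge_darts (edges G)"
proof (rule inj_onI)
  fix e1 e2 assume e1: "e1 \<in> edges G" and "e2 \<in> edges G" and eq: "edge_darts e1 = edge_darts e2"
  obtain u v where uv: "e1 = {u, v}" using edge_doubletonE[OF assms e1] by blast
  then have "(u, v) \<in> edge_darts e1" by (simp add: edge_darts_doubleton)
  then have "(u, v) \<in> edge_darts e2" using eq by simp
  then show "e1 = e2" using uv unfolding edge_darts_def by simp
qed

lemma reverse_perm_funpow:
  assumes "(u, v) \<in> darts G"
  shows "(reverse_perm G ^^ k) (u, v) = (if even k then (u, v) else (v, u))"
proof (induct k)
  case (Suc k)
  then show ?case using assms darts_swap[OF assms] unfolding reverse_perm_def by auto
qed simp

lemma traj_reverse_perm: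
  assumes "(u, v) \<in> darts G"
  shows "traj (reverse_perm G) (u, v) = edge_darts {u, v}"
proof
  show "traj (reverse_perm G) (u, v) \<subseteq> edge_darts {u, v}"
    unfolding traj_def edge_darts_doubleton using reverse_perm_funpow[OF assms] by auto
  have "(reverse_perm G ^^ 0) (u, v) = (u, v)" "(reverse_perm G ^^ 1) (u, v) = (v, u)"
    using reverse_perm_funpow[OF assms, of 1] by simp_all
  then show "edge_darts {u, v} \<subseteq> traj (reverse_perm G) (u, v)"
    unfolding traj_def edge_darts_doubleton by (metis empty_subsetI insert_subset rangeI)
qed

lemma card_traj_reverse_perm:
  assumes G: "simple_graph G"
  shows "card (traj (reverse_perm G) ` darts G) = card (edges G)"
proof -
  have "traj (reverse_perm G) ` darts G = edge_darts ` edges G"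
  proof
    show "traj (reverse_perm G) ` darts G \<subseteq> edge_darts ` edges G"
    proof
      fix D assume "D \<in> traj (reverse_perm G) ` darts G"
      then obtain u v where d: "(u, v) \<in> darts G" and D: "D = traj (reverse_perm G) (u, v)" by auto
      show "D \<in> edge_darts ` edges G" using traj_reverse_perm[OF d] d D unfolding in_darts_iff by blast
    qed
    show "edge_darts ` edges G \<subseteq> traj (reverse_perm G) ` darts G"
    proof
      fix D assume "D \<in> edge_darts ` edges G"
      then obtain e where e: "e \<in> edges G" and D: "D = edge_darts e" by blast
      obtain u v where uv: "e = {u, v}" using edge_doubletonE[OF G e] by blast
      then have d: "(u, v) \<in> darts G" using e by (simp add: in_darts_iff)
      show "D \<in> traj (reverse_perm G) ` darts G" using traj_reverse_perm[OF d] D uv d by blast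
    qed
  qed
  then show ?thesis using card_image[OF inj_on_edge_darts[OF G]] by simp
qed

lemma corner_perm_funpow:
  assumes G: "simple_graph G" and R: "rotation_system G \<rho>" and d: "(u, v) \<in> darts G"
  shows "(corner_perm G \<rho> ^^ k) (u, v) = (u, (\<rho> u ^^ k) v)"
proof -
  have u: "u \<in> verts G" using dart_ends[OF G d] by simp
  have rot: "cyclic_perm_on (nbrs G u) (\<rho> u)" using R u unfolding rotation_system_iff by blast
  have v: "v \<in> nbrs G u" using d by (simp add: in_darts_iff in_nbrs_iff)
  show ?thesis
  proof (induct k)
    case 0 then show ?case by simp
  next
    case (Suc k)
    have "(\<rho> u ^^ k) v \<in> nbrs G u" using cyclic_perm_on_funpow_in[OF rot v] .
    then have "(u, (\<rho> u ^^ k) v) \<in> darts G" by (simp add: in_darts_iff in_nbrs_iff)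
    then show ?case using Suc unfolding corner_perm_def by simp
  qed
qed

lemma traj_corner_perm:
  assumes G: "simple_graph G" and R: "rotation_system G \<rho>" and d: "(u, v) \<in> darts G"
  shows "traj (corner_perm G \<rho>) (u, v) = {u} \<times> nbrs G u"
proof -
  have u: "u \<in> verts G" using dart_ends[OF G d] by simp
  have rot: "cyclic_perm_on (nbrs G u) (\<rho> u)" using R u unfolding rotation_system_iff by blast
  have v: "v \<in> nbrs G u" using d by (simp add: in_darts_iff in_nbrs_iff)
  show ?thesis
  proof
    show "traj (corner_perm G \<rho>) (u, v) \<subseteq> {u} \<times> nbrs G u"
      unfolding traj_def using corner_perm_funpow[OF G R d] cyclic_perm_on_funpow_in[OF rot v] by auto
    show "{u} \<times> nbrs G u \<subseteq> traj (corner_perm G \<rho>) (u, v)"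
    proof
      fix d' assume "d' \<in> {u} \<times> nbrs G u"
      then obtain w where w: "d' = (u, w)" "w \<in> nbrs G u" by auto
      obtain k where "(\<rho> u ^^ k) v = w" using rot v w unfolding cyclic_perm_on_def by blast
      then have "(corner_perm G \<rho> ^^ k) (u, v) = d'" using corner_perm_funpow[OF G R d] w by simp
      then show "d' \<in> traj (corner_perm G \<rho>) (u, v)" unfolding traj_def by (metis rangeI)
    qed
  qed
qed

lemma card_traj_corner_perm:
  assumes G: "simple_graph G" and R: "rotation_system G \<rho>" and N: "no_isolated G"
  shows "card (traj (corner_perm G \<rho>) ` darts G) = card (verts G)"
proof -
  define h where "h u = {u} \<times> nbrs G u" for u
  have eq: "traj (corner_perm G \<rho>) ` darts G = h ` verts G"
  proof
    show "traj (corner_perm G \<rho>) ` darts G \<subseteq> h ` verts G"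
    proof
      fix Ob assume "Ob \<in> traj (corner_perm G \<rho>) ` darts G"
      then obtain u v where d: "(u, v) \<in> darts G" and Ob: "Ob = traj (corner_perm G \<rho>) (u, v)" by auto
      have "Ob = h u" using Ob traj_corner_perm[OF G R d] unfolding h_def by simp
      moreover have "u \<in> verts G" using dart_ends[OF G d] by simp
      ultimately show "Ob \<in> h ` verts G" by blast
    qed
    show "h ` verts G \<subseteq> traj (corner_perm G \<rho>) ` darts G"
    proof
      fix Ob assume "Ob \<in> h ` verts G"
      then obtain u where u: "u \<in> verts G" and Ob: "Ob = h u" by auto
      obtain v where v: "v \<in> nbrs G u" using N u unfolding no_isolated_def by blast
      have d: "(u, v) \<in> darts G" using v by (simp add: in_darts_iff in_nbrs_iff)
      have "Ob = traj (corner_perm G \<rho>) (u, v)" using Ob traj_corner_perm[OF G R d] unfolding h_def by simp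
      then show "Ob \<in> traj (corner_perm G \<rho>) ` darts G" using d by blast
    qed
  qed
  have inj: "inj_on h (verts G)"
  proof (rule inj_onI)
    fix u1 u2 assume u1: "u1 \<in> verts G" and u2: "u2 \<in> verts G" and eq: "h u1 = h u2"
    obtain v where v: "v \<in> nbrs G u1" using N u1 unfolding no_isolated_def by blast
    have "(u1, v) \<in> h u1" using v unfolding h_def by simp
    then have "(u1, v) \<in> h u2" using eq by simp
    then show "u1 = u2" unfolding h_def by simp
  qed
  show ?thesis using eq card_image[OF inj] by simp
qed

lemma finite_edges: assumes "simple_graph G" shows "finite (edges G)"
proof -
  have "edges G \<subseteq> Pow (verts G)" using assms unfolding simple_graph_def by blast
  moreover have "finite (verts G)" using assms unfolding simple_graph_def by blast
  ultimately show ?thesis by (meson finite_Pow_iff finite_subset)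
qed

lemma card_darts:
  assumes G: "simple_graph G"
  shows "card (darts G) = 2 * card (edges G)"
proof -
  have two: "card (edge_darts e) = 2" if "e \<in> edges G" for e
  proof -
    obtain u v where "e = {u, v}" "u \<noteq> v" using edge_doubletonE[OF G \<open>e \<in> edges G\<close>] by blast
    then show ?thesis by (simp add: edge_darts_doubleton)
  qed
  have "card (\<Union>e\<in>edges G. edge_darts e) = (\<Sum>e\<in>edges G. card (edge_darts e))"
  proof (rule card_UN_disjoint)
    show "finite (edges G)" using finite_edges[OF G] .
    show "\<forall>e\<in>edges G. finite (edge_darts e)" using two by (intro ballI card_ge_0_finite) simp
    have "edge_darts i \<inter> edge_darts j = {}" if "i \<noteq> j" for i j
    proof (rule equals0I)
      fix d assume d: "d \<in> edge_darts i \<inter> edge_darts j"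
      obtain u v where "d = (u, v)" by fastforce
      then have "{u, v} = i" "{u, v} = j" using d unfolding edge_darts_def by auto
      then show False using that by simp
    qed
    then show "\<forall>i\<in>edges G. \<forall>j\<in>edges G. i \<noteq> j \<longrightarrow> edge_darts i \<inter> edge_darts j = {}"
      by blast
  qed
  also have "\<dots> = (\<Sum>e\<in>edges G. 2)" using two by (rule sum.cong[OF refl])
  finally show ?thesis unfolding darts_eq_Union_edge_darts[symmetric] by simp
qed

lemma parity_aux: "even (d + f) = even (d + v + (d + e)) \<Longrightarrow> even (d::nat) \<Longrightarrow> even (f + v + (e::nat))"
  by presburger

theorem even_faces_verts_edges:
  assumes G: "simple_graph G" and R: "rotation_system G \<rho>" and N: "no_isolated G"
  shows "even (num_faces G \<rho> + card (verts G) + card (edges G))"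
proof -
  have fD: "finite (darts G)" using finite_darts[OF G] .
  have pS: "permutation (corner_perm G \<rho>)" using corner_perm_permutes[OF G R] fD permutation_permutes by blast
  have pT: "permutation (reverse_perm G)" using reverse_perm_permutes fD permutation_permutes by blast
  have "sign (face_perm G \<rho>) = sign (corner_perm G \<rho>) * sign (reverse_perm G)"
    unfolding face_perm_eq_comp by (rule sign_compose[OF pS pT])
  then have "(-1::int)^(card (darts G) + num_faces G \<rho>) =
      (-1)^(card (darts G) + card (verts G)) * (-1)^(card (darts G) + card (edges G))"
    unfolding num_faces_eq_card_traj[OF G R]
      sign_eq_traj_count[OF face_perm_permutes[OF G R] fD] sign_eq_traj_count[OF corner_perm_permutes[OF G R] fD]
      sign_eq_traj_count[OF reverse_perm_permutes fD] card_traj_corner_perm[OF G R N] card_traj_reverse_perm[OF G] .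
  then have "(-1::int)^(card (darts G) + num_faces G \<rho>) =
      (-1)^(card (darts G) + card (verts G) + (card (darts G) + card (edges G)))"
    by (simp add: power_add)
  then have "even (card (darts G) + num_faces G \<rho>) = even (card (darts G) + card (verts G) + (card (darts G) + card (edges G)))"
    by (auto simp: minus_one_power_iff split: if_splits)
  moreover have "even (card (darts G))" using card_darts[OF G] by simp
  ultimately show ?thesis using parity_aux by blast
qed

lemma num_faces_pos:
  assumes G: "simple_graph G" and E: "edges G \<noteq> {}"
  shows "num_faces G \<rho> \<ge> 1"
proof -
  obtain e where e: "e \<in> edges G" using E by blast
  obtain u v where "e = {u, v}" using edge_doubletonE[OF G e] by blast
  then have "(u, v) \<in> darts G" using e by (simp add: in_darts_iff)
  then have ne: "(\<lambda>d. {(face_step \<rho> ^^ k) d | k. True}) ` darts G \<noteq> {}" by blast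
  have "finite ((\<lambda>d. {(face_step \<rho> ^^ k) d | k. True}) ` darts G)"
    using finite_darts[OF G] by simp
  then show ?thesis using ne unfolding num_faces_def by (simp add: Suc_le_eq card_gt_0_iff)
qed

lemma embeds_genus_le_half_betti:
  assumes G: "simple_graph G" and E: "edges G \<noteq> {}" and emb: "embeds_with_genus G g"
  shows "int g \<le> betti G div 2"
proof -
  obtain \<rho> where eq: "int (card (verts G)) - int (card (edges G)) + int (num_faces G \<rho>) = 2 - 2 * int g"
    using emb unfolding embeds_with_genus_def by blast
  have "num_faces G \<rho> \<ge> 1" using num_faces_pos[OF G E] .
  then have "2 * int g \<le> betti G" using eq unfolding betti_def by linarith
  moreover have "betti G = 2 * (betti G div 2) + betti G mod 2" by simp
  moreover have "betti G mod 2 < 2" "betti G mod 2 \<ge> 0" by simp_all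
  ultimately show ?thesis by linarith
qed

lemma embeds_half_betti:
  assumes G: "simple_graph G" and E: "edges G \<noteq> {}" and N: "no_isolated G"
    and B: "betti G \<ge> 0" and R: "rotation_system G \<rho>" and F: "num_faces G \<rho> \<le> 2"
  shows "embeds_with_genus G (nat (betti G div 2))"
proof -
  have F1: "num_faces G \<rho> \<ge> 1" using num_faces_pos[OF G E] .
  have par: "even (num_faces G \<rho> + card (verts G) + card (edges G))" using even_faces_verts_edges[OF G R N] .
  have b2: "betti G = 2 * (betti G div 2) + betti G mod 2" by simp
  have "int (card (verts G)) - int (card (edges G)) + int (num_faces G \<rho>) = 2 - 2 * (betti G div 2)"
  proof (cases "num_faces G \<rho> = 1")
    case True
    then have "even (1 + card (verts G) + card (edges G))" using par by simp
    then have "even (betti G)" unfolding betti_def by presburger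
    then show ?thesis using True b2 unfolding betti_def by presburger
  next
    case False
    then have T: "num_faces G \<rho> = 2" using F F1 by simp
    then have "even (card (verts G) + card (edges G))" using par by simp
    then have "odd (betti G)" unfolding betti_def by presburger
    then show ?thesis using T b2 unfolding betti_def by presburger
  qed
  moreover have "int (nat (betti G div 2)) = betti G div 2" using B by simp
  ultimately show ?thesis unfolding embeds_with_genus_def using R by (metis)
qed

lemma max_genus_eq_half_betti_if_two_faces:
  assumes G: "simple_graph G" and E: "edges G \<noteq> {}" and N: "no_isolated G"
    and B: "betti G \<ge> 0" and R: "rotation_system G \<rho>" and F: "num_faces G \<rho> \<le> 2"
  shows "int (max_genus G) = betti G div 2"
proof -
  let ?g = "nat (betti G div 2)"
  have sub: "{g. embeds_with_genus G g} \<subseteq> {..?g}"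
    using embeds_genus_le_half_betti[OF G E] by fastforce
  have mem: "?g \<in> {g. embeds_with_genus G g}" using embeds_half_betti[OF assms] by simp
  have "Max {g. embeds_with_genus G g} = ?g"
  proof (rule Max_eqI)
    show "finite {g. embeds_with_genus G g}" using sub finite_subset by blast
    show "y \<le> ?g" if "y \<in> {g. embeds_with_genus G g}" for y using sub that by auto
  qed (rule mem)
  then show ?thesis unfolding max_genus_def using B by simp
qed

lemma funpow_agree_before_hit:
  assumes "\<forall>z\<in>S. z \<notin> B \<longrightarrow> g z = f z" "\<forall>z\<in>S. f z \<in> S" "d \<in> S"
    "\<forall>i<k. (f ^^ i) d \<notin> B"
  shows "(g ^^ k) d = (f ^^ k) d"
  using assms(4)
proof (induct k)
  case (Suc k)
  have "(f ^^ k) d \<in> S" using assms(2,3) by (induct k) auto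
  then show ?case using Suc assms(1) by simp
qed simp

lemma traj_subset_traj:
  assumes "\<forall>z\<in>S. f z \<in> S" "\<forall>z\<in>S. f z \<in> traj g z" "d \<in> S"
  shows "traj f d \<subseteq> traj g d"
proof -
  have "(f ^^ k) d \<in> S \<and> (f ^^ k) d \<in> traj g d" for k
  proof (induct k)
    case 0 then show ?case using assms(3) self_in_traj by simp
  next
    case (Suc k)
    then have "f ((f ^^ k) d) \<in> S" "f ((f ^^ k) d) \<in> traj g ((f ^^ k) d)" using assms(1,2) by blast+
    then show ?case using Suc traj_trans by auto
  qed
  then show ?thesis unfolding traj_def by blast
qed

definition insert_after :: "('a \<Rightarrow> 'a) \<Rightarrow> 'a \<Rightarrow> 'a \<Rightarrow> 'a \<Rightarrow> 'a" where
  "insert_after f a0 x = (\<lambda>z. if z = a0 then x else if z = x then f a0 else f z)"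

lemma insert_after_eq_comp:
  assumes "a0 \<noteq> x"
  shows "insert_after f a0 x = f(x := x) \<circ> transpose a0 x"
proof
  fix z
  show "insert_after f a0 x z = (f(x := x) \<circ> transpose a0 x) z"
    using assms unfolding insert_after_def by (simp add: transpose_def)
qed

lemma bij_betw_fun_upd_fixed:
  assumes "bij_betw f N N" "x \<notin> N"
  shows "bij_betw (f(x := x)) (insert x N) (insert x N)"
proof -
  have "bij_betw (f(x := x)) N N \<longleftrightarrow> bij_betw f N N" using assms(2) by (intro bij_betw_cong) auto
  then have "bij_betw (f(x := x)) (N \<union> {x}) (N \<union> {x})"
    using assms by (intro bij_betw_combine) auto
  then show ?thesis by simp
qed

lemma cyclic_perm_on_insert_after:
  assumes R: "cyclic_perm_on N f" and a0: "a0 \<in> N" and x: "x \<notin> N"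
  shows "cyclic_perm_on (insert x N) (insert_after f a0 x)"
proof -
  let ?g = "insert_after f a0 x"
  have a0x: "a0 \<noteq> x" using a0 x by blast
  have fN: "f z \<in> N" if "z \<in> N" for z using cyclic_perm_on_in[OF R that] .
  have "bij_betw (f(x := x)) (insert x N) (insert x N)"
    using R x unfolding cyclic_perm_on_def by (blast intro: bij_betw_fun_upd_fixed)
  then have bij: "bij_betw ?g (insert x N) (insert x N)"
    unfolding insert_after_eq_comp[OF a0x] using a0 by (intro bij_betw_trans) simp_all
  have g_a0: "?g a0 = x" and g_x: "?g x = f a0" using a0x unfolding insert_after_def by auto
  have f_traj: "f z \<in> traj ?g z" if z: "z \<in> N" for z
  proof (cases "z = a0")
    case True
    then show ?thesis using g_a0 g_x step_in_traj traj_trans by metis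
  next
    case False
    then have "?g z = f z" using z x unfolding insert_after_def by auto
    then show ?thesis using step_in_traj by metis
  qed
  have NN: "t \<in> traj ?g s" if "s \<in> N" "t \<in> N" for s t
  proof -
    have "t \<in> traj f s" using R that unfolding cyclic_perm_on_def traj_iff by blast
    moreover have "traj f s \<subseteq> traj ?g s"
      using fN f_traj \<open>s \<in> N\<close> by (intro traj_subset_traj) auto
    ultimately show ?thesis by blast
  qed
  moreover have "t \<in> traj ?g s" if s: "s \<in> insert x N" and t: "t \<in> insert x N" for s t
  proof -
    consider "s = x" "t = x" | "s = x" "t \<in> N" | "s \<in> N" "t = x" | "s \<in> N" "t \<in> N"
      using s t by blast
    then show ?thesis
    proof cases
      case 1 then show ?thesis using self_in_traj by metis
    next
      case 2 then show ?thesis using NN[OF fN[OF a0]] g_x step_in_traj traj_trans by metis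
    next
      case 3 then show ?thesis using NN[OF _ a0] g_a0 step_in_traj traj_trans by metis
    next
      case 4 then show ?thesis using NN by blast
    qed
  qed
  ultimately show ?thesis using bij unfolding cyclic_perm_on_def traj_iff by blast
qed

lemma cyclic_perm_on_singleton: "cyclic_perm_on {a} id"
  unfolding cyclic_perm_on_def by (auto intro: exI[of _ 0])

lemma cyclic_perm_on_pair:
  assumes "a \<noteq> b"
  shows "cyclic_perm_on {a, b} (\<lambda>z. if z = a then b else a)"
proof -
  let ?s = "\<lambda>z. if z = a then b else a"
  have "bij_betw ?s {a, b} {a, b}"
    using assms unfolding bij_betw_def inj_on_def by auto
  moreover have "\<exists>k. (?s ^^ k) s = t" if "s \<in> {a, b}" "t \<in> {a, b}" for s t
  proof (cases "s = t")
    case True then show ?thesis by (metis funpow_0)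
  next
    case False
    then have "(?s ^^ 1) s = t" using that assms by auto
    then show ?thesis by blast
  qed
  ultimately show ?thesis unfolding cyclic_perm_on_def by blast
qed

definition adj :: "'a graph \<Rightarrow> ('a \<times> 'a) set" where
  "adj G = {(p, q). {p, q} \<in> edges G}"

lemma connected_graph_iff_adj:
  "connected_graph G \<longleftrightarrow> verts G \<noteq> {} \<and> (\<forall>u\<in>verts G. \<forall>v\<in>verts G. (u, v) \<in> (adj G)\<^sup>*)"
  unfolding connected_graph_def adj_def by simp

lemma connected_graph_extend:
  assumes C: "connected_graph G" and E: "edges G \<subseteq> edges G'" and V: "verts G' = verts G \<union> W"
    and W: "\<forall>w\<in>W. \<exists>z\<in>verts G. (w, z) \<in> (adj G')\<^sup>* \<and> (z, w) \<in> (adj G')\<^sup>*"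
  shows "connected_graph G'"
proof -
  have mono: "(adj G)\<^sup>* \<subseteq> (adj G')\<^sup>*" using E unfolding adj_def by (intro rtrancl_mono) auto
  have old: "(u, v) \<in> (adj G')\<^sup>*" if "u \<in> verts G" "v \<in> verts G" for u v
    using C that mono unfolding connected_graph_iff_adj by blast
  have "(u, v) \<in> (adj G')\<^sup>*" if u: "u \<in> verts G'" and v: "v \<in> verts G'" for u v
  proof -
    obtain u' where u': "u' \<in> verts G" "(u, u') \<in> (adj G')\<^sup>*"
      using u V W by (metis UnE rtrancl.rtrancl_refl)
    obtain v' where v': "v' \<in> verts G" "(v', v) \<in> (adj G')\<^sup>*"
      using v V W by (metis UnE rtrancl.rtrancl_refl)
    show ?thesis using old[OF u'(1) v'(1)] u'(2) v'(2) by (meson rtrancl_trans)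
  qed
  moreover have "verts G' \<noteq> {}" using C V unfolding connected_graph_iff_adj by blast
  ultimately show ?thesis unfolding connected_graph_iff_adj by blast
qed

definition faces_hit :: "'a graph \<Rightarrow> ('a \<Rightarrow> 'a \<Rightarrow> 'a) \<Rightarrow> ('a \<times> 'a) set \<Rightarrow> bool" where
  "faces_hit G \<rho> R \<longleftrightarrow> (\<forall>d\<in>darts G. \<exists>r\<in>R. r \<in> traj (face_perm G \<rho>) d)"

lemma faces_hit_pair_iff:
  "faces_hit G \<rho> {p, q} \<longleftrightarrow> (\<forall>d\<in>darts G. p \<in> traj (face_perm G \<rho>) d \<or> q \<in> traj (face_perm G \<rho>) d)"
  unfolding faces_hit_def by simp

lemma faces_hit_mono: "faces_hit G \<rho> R \<Longrightarrow> R \<subseteq> R' \<Longrightarrow> faces_hit G \<rho> R'"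
  unfolding faces_hit_def by blast

lemma face_perm_permutation:
  assumes "simple_graph G" "rotation_system G \<rho>"
  shows "permutation (face_perm G \<rho>)"
  using face_perm_permutes[OF assms] finite_darts[OF assms(1)] permutation_permutes by blast

lemma num_faces_le_card:
  assumes G: "simple_graph G" and R: "rotation_system G \<rho>" and "faces_hit G \<rho> Rs" "finite Rs"
  shows "num_faces G \<rho> \<le> card Rs"
proof -
  have "\<forall>d\<in>darts G. \<exists>r\<in>Rs. r \<in> traj (face_perm G \<rho>) d" using assms(3) unfolding faces_hit_def .
  then show ?thesis unfolding num_faces_eq_card_traj[OF G R]
    by (rule card_traj_image_le[OF face_perm_permutation[OF G R] assms(4)])
qed

lemma faces_hit_singleton_move:
  assumes G: "simple_graph G" and R: "rotation_system G \<rho>"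
    and hit: "faces_hit G \<rho> {r}" and r': "r' \<in> darts G"
  shows "faces_hit G \<rho> {r'}"
proof -
  let ?f = "face_perm G \<rho>"
  have "r \<in> traj ?f r'" using hit r' unfolding faces_hit_def by simp
  then have r_r: "r' \<in> traj ?f r" by (rule traj_sym[OF face_perm_permutation[OF G R]])
  have "r' \<in> traj ?f d" if "d \<in> darts G" for d
  proof -
    have "r \<in> traj ?f d" using hit that unfolding faces_hit_def by simp
    then show ?thesis using r_r by (rule traj_trans)
  qed
  then show ?thesis unfolding faces_hit_def by simp
qed

definition face_representable :: "'a graph \<Rightarrow> ('a \<times> 'a) set \<Rightarrow> bool" where
  "face_representable G R \<longleftrightarrow> simple_graph G \<and> no_isolated G \<and> connected_graph G \<and>
     (\<exists>\<rho>. rotation_system G \<rho> \<and> faces_hit G \<rho> R)"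

lemma face_representable_singleton_move:
  assumes "face_representable G {r}" "r' \<in> darts G"
  shows "face_representable G {r'}"
  using assms faces_hit_singleton_move unfolding face_representable_def by blast

lemma max_genus_eq_half_betti:
  assumes rep: "face_representable G R" and "finite R" "card R \<le> 2"
    and E: "edges G \<noteq> {}" and B: "betti G \<ge> 0"
  shows "int (max_genus G) = betti G div 2"
proof -
  have G: "simple_graph G" and N: "no_isolated G" using rep unfolding face_representable_def by blast+
  obtain \<rho> where R: "rotation_system G \<rho>" and hit: "faces_hit G \<rho> R"
    using rep unfolding face_representable_def by blast
  have "num_faces G \<rho> \<le> card R" by (rule num_faces_le_card[OF G R hit assms(2)])
  then have "num_faces G \<rho> \<le> 2" using assms(3) by simp
  then show ?thesis by (rule max_genus_eq_half_betti_if_two_faces[OF G E N B R])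
qed

definition add_leaf :: "'a graph \<Rightarrow> 'a \<Rightarrow> 'a \<Rightarrow> 'a graph" where
  "add_leaf G a x = (insert x (verts G), insert {a, x} (edges G))"

definition leaf_rot :: "('a \<Rightarrow> 'a \<Rightarrow> 'a) \<Rightarrow> 'a \<Rightarrow> 'a \<Rightarrow> 'a \<Rightarrow> 'a \<Rightarrow> 'a \<Rightarrow> 'a" where
  "leaf_rot \<rho> a a0 x = \<rho>(a := insert_after (\<rho> a) a0 x, x := id)"

lemma new_vertex_notin_edge:
  assumes "simple_graph G" "x \<notin> verts G" "e \<in> edges G"
  shows "x \<notin> e"
  using assms unfolding simple_graph_def by blast

lemma nbr_in_verts:
  assumes "simple_graph G" "v \<in> nbrs G u"
  shows "v \<in> verts G"
proof -
  have "(u, v) \<in> darts G" using assms(2) by (simp add: in_nbrs_iff in_darts_iff)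
  then show ?thesis by (rule dart_ends(2)[OF assms(1)])
qed

lemma verts_add_leaf: "verts (add_leaf G a x) = insert x (verts G)"
  unfolding add_leaf_def verts_def by simp

lemma edges_add_leaf: "edges (add_leaf G a x) = insert {a, x} (edges G)"
  unfolding add_leaf_def edges_def by simp

locale leaf_ext =
  fixes G :: "'a graph" and a x
  assumes G: "simple_graph G" and a: "a \<in> verts G" and x: "x \<notin> verts G"
begin

abbreviation "G' \<equiv> add_leaf G a x"

lemmas verts' = verts_add_leaf[of G a x] and edges' = edges_add_leaf[of G a x]

lemma ax: "a \<noteq> x" using a x by blast

lemma darts': "darts G' = darts G \<union> {(a, x), (x, a)}"
  unfolding darts_def edges' by (auto simp: doubleton_eq_iff)

lemma x_notin_edges: "{x, v} \<notin> edges G" "{v, x} \<notin> edges G"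
  using new_vertex_notin_edge[OF G x] by blast+

lemma simple': "simple_graph G'"
  using G a ax unfolding simple_graph_def verts' edges' by auto

lemma nbrs': "nbrs G' u = (if u = a then insert x (nbrs G a) else if u = x then {a} else nbrs G u)"
  unfolding nbrs_def edges' using ax x_notin_edges by (auto simp: doubleton_eq_iff)

lemma no_isolated': "no_isolated G \<Longrightarrow> no_isolated G'"
  unfolding no_isolated_def verts' nbrs' by auto

lemma connected': "connected_graph G \<Longrightarrow> connected_graph G'"
proof (rule connected_graph_extend)
  show "edges G \<subseteq> edges G'" unfolding edges' by blast
  show "verts G' = verts G \<union> {x}" unfolding verts' by blast
  have "(x, a) \<in> adj G'" "(a, x) \<in> adj G'" unfolding adj_def edges' by (auto simp: insert_commute)
  then show "\<forall>w\<in>{x}. \<exists>z\<in>verts G. (w, z) \<in> (adj G')\<^sup>* \<and> (z, w) \<in> (adj G')\<^sup>*"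
    using a by blast
qed

lemma betti': "betti G' = betti G"
proof -
  have "finite (verts G)" using G unfolding simple_graph_def by blast
  moreover have "{a, x} \<notin> edges G" using x_notin_edges by (simp add: insert_commute)
  ultimately show ?thesis
    using finite_edges[OF G] x unfolding betti_def verts' edges' by simp
qed

context
  fixes \<rho> a0
  assumes R: "rotation_system G \<rho>" and a0: "a0 \<in> nbrs G a"
begin

abbreviation "\<rho>' \<equiv> leaf_rot \<rho> a a0 x"

lemma a0x: "a0 \<noteq> x" using nbr_in_verts[OF G a0] x by blast

lemma rot': "rotation_system G' \<rho>'"
  unfolding rotation_system_iff
proof
  fix u assume u: "u \<in> verts G'"
  consider "u = a" | "u = x" | "u \<in> verts G" "u \<noteq> a" "u \<noteq> x" using u verts' by blast
  then show "cyclic_perm_on (nbrs G' u) (\<rho>' u)"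
  proof cases
    case 1
    have "cyclic_perm_on (nbrs G a) (\<rho> a)" using R a unfolding rotation_system_iff by blast
    moreover have "x \<notin> nbrs G a" using x_notin_edges by (simp add: in_nbrs_iff)
    ultimately have "cyclic_perm_on (insert x (nbrs G a)) (insert_after (\<rho> a) a0 x)"
      by (rule cyclic_perm_on_insert_after[OF _ a0])
    then show ?thesis using 1 ax unfolding nbrs' leaf_rot_def by simp
  next
    case 2
    then show ?thesis using ax unfolding nbrs' leaf_rot_def by (simp add: cyclic_perm_on_singleton)
  next
    case 3
    then have "cyclic_perm_on (nbrs G u) (\<rho> u)" using R unfolding rotation_system_iff by blast
    then show ?thesis using 3 unfolding nbrs' leaf_rot_def by simp
  qed
qed

lemma face_perm_old:
  assumes d: "d \<in> darts G" and dp: "d \<noteq> (a0, a)"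
  shows "face_perm G' \<rho>' d = face_perm G \<rho> d"
proof -
  obtain u v where uv: "d = (u, v)" by fastforce
  have "u \<in> verts G" "v \<in> verts G" using dart_ends[OF G] d uv by auto
  then have "\<rho>' v u = \<rho> v u"
    using dp uv x unfolding leaf_rot_def insert_after_def by auto
  then show ?thesis using d uv darts' unfolding face_perm_def face_step_def by simp
qed

lemma a0_dart: "(a0, a) \<in> darts G" using a0 by (simp add: in_darts_iff in_nbrs_iff insert_commute)

lemma face_perm_new:
  "face_perm G' \<rho>' (a0, a) = (a, x)"
  "face_perm G' \<rho>' (a, x) = (x, a)"
  "face_perm G' \<rho>' (x, a) = face_perm G \<rho> (a0, a)"
  using a0_dart darts' ax a0x
  unfolding face_perm_def face_step_def leaf_rot_def insert_after_def by simp_all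

text \<open>The leaf is spliced into the face through the corner (a0, a); all other faces are unchanged.\<close>

lemma faces_hit':
  assumes hit: "faces_hit G \<rho> Rs"
  shows "faces_hit G' \<rho>' Rs"
proof -
  let ?f = "face_perm G \<rho>" and ?g = "face_perm G' \<rho>'"
  have fS: "\<forall>z\<in>darts G. ?f z \<in> darts G"
    using permutes_in_image[OF face_perm_permutes[OF G R]] by blast
  have "\<forall>z\<in>darts G. ?f z \<in> traj ?g z"
  proof
    fix z assume z: "z \<in> darts G"
    show "?f z \<in> traj ?g z"
    proof (cases "z = (a0, a)")
      case True
      have "(?g ^^ 3) z = ?f z" using True face_perm_new by (simp add: numeral_3_eq_3)
      then show ?thesis unfolding traj_iff by blast
    next
      case False
      then show ?thesis using face_perm_old[OF z False] step_in_traj by metis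
    qed
  qed
  then have old: "traj ?f d \<subseteq> traj ?g d" if "d \<in> darts G" for d
    using traj_subset_traj[OF fS _ that] by blast
  have "\<exists>r\<in>Rs. r \<in> traj ?g d" if d: "d \<in> darts G'" for d
  proof (cases "d \<in> darts G")
    case True
    then show ?thesis using hit old unfolding faces_hit_def by blast
  next
    case False
    then have d2: "d = (a, x) \<or> d = (x, a)" using d darts' by blast
    have fp: "?f (a0, a) \<in> darts G" using fS a0_dart by blast
    then obtain r where r: "r \<in> Rs" "r \<in> traj ?g (?f (a0, a))"
      using hit old unfolding faces_hit_def by blast
    have "?f (a0, a) \<in> traj ?g (x, a)" using face_perm_new(3) step_in_traj by metis
    moreover have "(x, a) \<in> traj ?g (a, x)" using face_perm_new(2) step_in_traj by metis
    ultimately have "r \<in> traj ?g (x, a)" "r \<in> traj ?g (a, x)" using r(2) traj_trans by metis+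
    then show ?thesis using d2 r(1) by blast
  qed
  then show ?thesis unfolding faces_hit_def by blast
qed

end

lemma face_representable':
  assumes "face_representable G Rs"
  shows "face_representable G' Rs"
proof -
  have N: "no_isolated G" and C: "connected_graph G" using assms unfolding face_representable_def by blast+
  obtain \<rho> where R: "rotation_system G \<rho>" and hit: "faces_hit G \<rho> Rs"
    using assms unfolding face_representable_def by blast
  obtain a0 where a0: "a0 \<in> nbrs G a" using N a unfolding no_isolated_def by blast
  show ?thesis unfolding face_representable_def
    using simple' no_isolated'[OF N] connected'[OF C] rot'[OF R a0] faces_hit'[OF R a0 hit] by blast
qed

end

lemma add_leaf_preserves:
  assumes "face_representable G Rs" "a \<in> verts G" "x \<notin> verts G"
  shows "face_representable (add_leaf G a x) Rs" "betti (add_leaf G a x) = betti G"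
proof -
  have "simple_graph G" using assms(1) unfolding face_representable_def by blast
  then interpret leaf_ext G a x using assms(2,3) by unfold_locales
  show "face_representable (add_leaf G a x) Rs" by (rule face_representable'[OF assms(1)])
  show "betti (add_leaf G a x) = betti G" by (rule betti')
qed

lemma edges_add_leaf_ne: "edges (add_leaf G a x) \<noteq> {}"
  unfolding add_leaf_def edges_def by simp

definition add_ear :: "'a graph \<Rightarrow> 'a \<Rightarrow> 'a \<Rightarrow> 'a \<Rightarrow> 'a \<Rightarrow> 'a graph" where
  "add_ear G a x y b = (verts G \<union> {x, y}, edges G \<union> {{a, x}, {x, y}, {y, b}})"

definition ear_rot :: "('a \<Rightarrow> 'a \<Rightarrow> 'a) \<Rightarrow> 'a \<Rightarrow> 'a \<Rightarrow> 'a \<Rightarrow> 'a \<Rightarrow> 'a \<Rightarrow> 'a \<Rightarrow> 'a \<Rightarrow> 'a \<Rightarrow> 'a" where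
  "ear_rot \<rho> a a0 x y b b0 = \<rho>(a := insert_after (\<rho> a) a0 x, b := insert_after (\<rho> b) b0 y,
     x := (\<lambda>z. if z = a then y else a), y := (\<lambda>z. if z = x then b else x))"

lemma faces_hit_pair_replace:
  assumes "faces_hit G \<rho> {p, r}" "q \<in> traj (face_perm G \<rho>) r"
  shows "faces_hit G \<rho> {p, q}"
  using assms traj_trans[OF _ assms(2)] unfolding faces_hit_pair_iff by blast

lemma verts_add_ear: "verts (add_ear G a x y b) = verts G \<union> {x, y}"
  unfolding add_ear_def verts_def by simp

lemma edges_add_ear: "edges (add_ear G a x y b) = edges G \<union> {{a, x}, {x, y}, {y, b}}"
  unfolding add_ear_def edges_def by simp

locale ear_ext =
  fixes G :: "'a graph" and a x y b
  assumes G: "simple_graph G" and a: "a \<in> verts G" and b: "b \<in> verts G" and ab: "a \<noteq> b"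
    and x: "x \<notin> verts G" and y: "y \<notin> verts G" and xy: "x \<noteq> y"
begin

abbreviation "G' \<equiv> add_ear G a x y b"

lemmas verts' = verts_add_ear[of G a x y b] and edges' = edges_add_ear[of G a x y b]

lemma dist: "a \<noteq> x" "a \<noteq> y" "b \<noteq> x" "b \<noteq> y" using a b x y by auto

lemma darts': "darts G' = darts G \<union> {(a, x), (x, a), (x, y), (y, x), (y, b), (b, y)}"
  unfolding darts_def edges' by (auto simp: doubleton_eq_iff)

lemma xy_notin_edges: "{x, v} \<notin> edges G" "{v, x} \<notin> edges G" "{y, v} \<notin> edges G" "{v, y} \<notin> edges G"
  using new_vertex_notin_edge[OF G x] new_vertex_notin_edge[OF G y] by blast+

lemma simple': "simple_graph G'"
  using G a b dist xy unfolding simple_graph_def verts' edges' by auto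

lemma nbrs': "nbrs G' u = (if u = a then insert x (nbrs G a) else if u = b then insert y (nbrs G b)
    else if u = x then {a, y} else if u = y then {x, b} else nbrs G u)"
  unfolding nbrs_def edges' using dist xy ab xy_notin_edges by (auto simp: doubleton_eq_iff)

lemma no_isolated': "no_isolated G \<Longrightarrow> no_isolated G'"
  unfolding no_isolated_def verts' nbrs' by auto

lemma connected': "connected_graph G \<Longrightarrow> connected_graph G'"
proof (rule connected_graph_extend)
  show "edges G \<subseteq> edges G'" unfolding edges' by blast
  show "verts G' = verts G \<union> {x, y}" unfolding verts' by blast
  have r: "(x, a) \<in> adj G'" "(a, x) \<in> adj G'" "(y, b) \<in> adj G'" "(b, y) \<in> adj G'"
    unfolding adj_def edges' by (auto simp: insert_commute)
  show "\<forall>w\<in>{x, y}. \<exists>z\<in>verts G. (w, z) \<in> (adj G')\<^sup>* \<and> (z, w) \<in> (adj G')\<^sup>*"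
    using a b r by blast
qed

lemma card_edges': "card (edges G') = card (edges G) + 3"
proof -
  have "{a, x} \<notin> edges G" "{x, y} \<notin> edges G" "{y, b} \<notin> edges G"
    using xy_notin_edges by (auto simp: insert_commute)
  moreover have "{a, x} \<noteq> {x, y}" "{a, x} \<noteq> {y, b}" "{x, y} \<noteq> {y, b}"
    using dist xy by (auto simp: doubleton_eq_iff)
  ultimately show ?thesis using finite_edges[OF G] unfolding edges' by simp
qed

lemma betti': "betti G' = betti G + 1"
proof -
  have "card (verts G') = card (verts G) + 2"
    using G x y xy unfolding verts' simple_graph_def by simp
  then show ?thesis unfolding betti_def card_edges' by simp
qed

context
  fixes \<rho> a0 b0
  assumes R: "rotation_system G \<rho>" and a0: "a0 \<in> nbrs G a" and b0: "b0 \<in> nbrs G b"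
begin

abbreviation "\<rho>' \<equiv> ear_rot \<rho> a a0 x y b b0"

lemma ends_ne: "a0 \<noteq> x" "a0 \<noteq> y" "b0 \<noteq> x" "b0 \<noteq> y"
  using nbr_in_verts[OF G a0] nbr_in_verts[OF G b0] x y by auto

lemma rho'_simps:
  "\<rho>' a = insert_after (\<rho> a) a0 x" "\<rho>' b = insert_after (\<rho> b) b0 y"
  "\<rho>' x = (\<lambda>z. if z = a then y else a)" "\<rho>' y = (\<lambda>z. if z = x then b else x)"
  "u \<notin> {a, b, x, y} \<Longrightarrow> \<rho>' u = \<rho> u"
  unfolding ear_rot_def using dist xy ab by auto

lemma rot': "rotation_system G' \<rho>'"
  unfolding rotation_system_iff
proof
  fix u assume u: "u \<in> verts G'"
  have end_rot: "cyclic_perm_on (insert z (nbrs G w)) (insert_after (\<rho> w) w0 z)"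
    if "w \<in> verts G" "w0 \<in> nbrs G w" "z \<notin> verts G" for w w0 z
  proof -
    have "cyclic_perm_on (nbrs G w) (\<rho> w)" using R that(1) unfolding rotation_system_iff by blast
    moreover have "z \<notin> nbrs G w" using nbr_in_verts[OF G] that(3) by blast
    ultimately show ?thesis by (rule cyclic_perm_on_insert_after[OF _ that(2)])
  qed
  consider "u = a" | "u = b" | "u = x" | "u = y" | "u \<in> verts G" "u \<notin> {a, b, x, y}"
    using u verts' by blast
  then show "cyclic_perm_on (nbrs G' u) (\<rho>' u)"
  proof cases
    case 1 then show ?thesis using end_rot[OF a a0 x] unfolding nbrs' by (simp add: rho'_simps(1))
  next
    case 2 then show ?thesis using end_rot[OF b b0 y] ab unfolding nbrs' by (simp add: rho'_simps(2))
  next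
    case 3 then show ?thesis using cyclic_perm_on_pair[OF dist(2)] dist unfolding nbrs' by (simp add: rho'_simps(3))
  next
    case 4 then show ?thesis
      using cyclic_perm_on_pair[OF not_sym[OF dist(3)]] dist xy unfolding nbrs' by (simp add: rho'_simps(4))
  next
    case 5
    then have "cyclic_perm_on (nbrs G u) (\<rho> u)" using R unfolding rotation_system_iff by blast
    then show ?thesis using 5 unfolding nbrs' by (simp add: rho'_simps(5))
  qed
qed

lemma a0_dart: "(a0, a) \<in> darts G" using a0 by (simp add: in_darts_iff in_nbrs_iff insert_commute)
lemma b0_dart: "(b0, b) \<in> darts G" using b0 by (simp add: in_darts_iff in_nbrs_iff insert_commute)

lemma face_perm_old:
  assumes d: "d \<in> darts G" and "d \<noteq> (a0, a)" "d \<noteq> (b0, b)"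
  shows "face_perm G' \<rho>' d = face_perm G \<rho> d"
proof -
  obtain u v where uv: "d = (u, v)" by fastforce
  have "u \<in> verts G" "v \<in> verts G" using dart_ends[OF G] d uv by auto
  then have "u \<noteq> x" "u \<noteq> y" "v \<noteq> x" "v \<noteq> y" using x y by auto
  then have "\<rho>' v u = \<rho> v u"
    using assms(2,3) uv ab rho'_simps by (cases "v = a"; cases "v = b") (auto simp: insert_after_def)
  then show ?thesis using d uv darts' unfolding face_perm_def face_step_def by simp
qed

lemma face_perm_new:
  "face_perm G' \<rho>' (a0, a) = (a, x)"
  "face_perm G' \<rho>' (a, x) = (x, y)"
  "face_perm G' \<rho>' (x, y) = (y, b)"
  "face_perm G' \<rho>' (y, b) = face_perm G \<rho> (b0, b)"
  "face_perm G' \<rho>' (b0, b) = (b, y)"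
  "face_perm G' \<rho>' (b, y) = (y, x)"
  "face_perm G' \<rho>' (y, x) = (x, a)"
  "face_perm G' \<rho>' (x, a) = face_perm G \<rho> (a0, a)"
  using a0_dart b0_dart ends_ne dist
  unfolding face_perm_def face_step_def darts' by (simp_all add: rho'_simps(1-4) insert_after_def)

lemma first_corner_reached:
  assumes d: "d \<in> darts G" and c: "c \<in> {(a0, a), (b0, b)}" "c \<in> traj (face_perm G \<rho>) d"
  obtains c' where "c' \<in> {(a0, a), (b0, b)}" "c' \<in> traj (face_perm G \<rho>) d" "c' \<in> traj (face_perm G' \<rho>') d"
proof -
  let ?f = "face_perm G \<rho>" and ?g = "face_perm G' \<rho>'" and ?C = "{(a0, a), (b0, b)}"
  obtain k where "(?f ^^ k) d \<in> ?C" using c unfolding traj_iff by blast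
  then obtain k0 where k0: "(?f ^^ k0) d \<in> ?C" "\<forall>i<k0. (?f ^^ i) d \<notin> ?C"
    using exists_least_iff[of "\<lambda>k. (?f ^^ k) d \<in> ?C"] by blast
  have "(?g ^^ k0) d = (?f ^^ k0) d"
  proof (rule funpow_agree_before_hit[OF _ _ d k0(2)])
    show "\<forall>z\<in>darts G. z \<notin> ?C \<longrightarrow> ?g z = ?f z" using face_perm_old by blast
    show "\<forall>z\<in>darts G. ?f z \<in> darts G" using permutes_in_image[OF face_perm_permutes[OF G R]] by blast
  qed
  then show ?thesis using that k0(1) unfolding traj_iff by metis
qed

lemma new_dart_reaches_old:
  assumes "d \<in> darts G'" "d \<notin> darts G"
  shows "face_perm G \<rho> (a0, a) \<in> traj (face_perm G' \<rho>') d \<or> face_perm G \<rho> (b0, b) \<in> traj (face_perm G' \<rho>') d"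
proof -
  let ?g = "face_perm G' \<rho>'" and ?fp = "face_perm G \<rho> (a0, a)" and ?fq = "face_perm G \<rho> (b0, b)"
  have step: "w \<in> traj ?g u" if "?g u = v" "w \<in> traj ?g v" for u v w
    using traj_trans[OF step_in_traj[of ?g u]] that by simp
  have yb: "?fq \<in> traj ?g (y, b)" by (rule step[OF face_perm_new(4) self_in_traj])
  have xy: "?fq \<in> traj ?g (x, y)" by (rule step[OF face_perm_new(3) yb])
  have ax: "?fq \<in> traj ?g (a, x)" by (rule step[OF face_perm_new(2) xy])
  have xa: "?fp \<in> traj ?g (x, a)" by (rule step[OF face_perm_new(8) self_in_traj])
  have yx: "?fp \<in> traj ?g (y, x)" by (rule step[OF face_perm_new(7) xa])
  have by': "?fp \<in> traj ?g (b, y)" by (rule step[OF face_perm_new(6) yx])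
  have "d \<in> {(a, x), (x, a), (x, y), (y, x), (y, b), (b, y)}" using assms darts' by blast
  then show ?thesis using yb xy ax xa yx by' by blast
qed

text \<open>If all darts of G lie on one face, the ear splits it into two faces, through (x, y) and (b, y).\<close>

lemma faces_hit_split:
  assumes one: "faces_hit G \<rho> {r}"
  shows "faces_hit G' \<rho>' {(x, y), (b, y)}"
proof -
  let ?f = "face_perm G \<rho>" and ?g = "face_perm G' \<rho>'"
  have p: "(a0, a) \<in> traj ?f d" if "d \<in> darts G" for d
    using faces_hit_singleton_move[OF G R one a0_dart] that unfolding faces_hit_def by simp
  have xy: "(x, y) \<in> traj ?g (a0, a)"
    unfolding traj_iff by (rule exI[of _ 2]) (simp add: numeral_2_eq_2 face_perm_new)
  have by': "(b, y) \<in> traj ?g (b0, b)"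
    using step_in_traj[of ?g "(b0, b)"] by (simp add: face_perm_new)
  have old: "(x, y) \<in> traj ?g d \<or> (b, y) \<in> traj ?g d" if d: "d \<in> darts G" for d
  proof -
    obtain c where "c \<in> {(a0, a), (b0, b)}" "c \<in> traj ?g d"
      using first_corner_reached[OF d _ p[OF d]] by blast
    then show ?thesis using traj_trans[OF _ xy] traj_trans[OF _ by'] by blast
  qed
  have "(x, y) \<in> traj ?g d \<or> (b, y) \<in> traj ?g d" if d: "d \<in> darts G'" for d
  proof (cases "d \<in> darts G")
    case False
    have fS: "?f z \<in> darts G" if "z \<in> darts G" for z
      using permutes_in_image[OF face_perm_permutes[OF G R]] that by blast
    show ?thesis
      using new_dart_reaches_old[OF d False] old[OF fS[OF a0_dart]] old[OF fS[OF b0_dart]]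
        traj_trans[of _ ?g d "(x, y)"] traj_trans[of _ ?g d "(b, y)"] by blast
  qed (use old in blast)
  then show ?thesis unfolding faces_hit_pair_iff by blast
qed

text \<open>If the corners (a0, a) and (b0, b) lie on the only two faces of G, the ear merges them into one.\<close>

lemma faces_hit_merge:
  assumes sep: "(a0, a) \<notin> traj (face_perm G \<rho>) (b0, b)"
    and two: "faces_hit G \<rho> {(a0, a), (b0, b)}"
  shows "faces_hit G' \<rho>' {(a0, a)}"
proof -
  let ?f = "face_perm G \<rho>" and ?g = "face_perm G' \<rho>'"
  let ?p = "(a0, a)" and ?q = "(b0, b)"
  have perm: "permutation ?f" by (rule face_perm_permutation[OF G R])
  have fS: "?f z \<in> darts G" if "z \<in> darts G" for z
    using permutes_in_image[OF face_perm_permutes[OF G R]] that by blast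
  have from_p: "?p \<in> traj ?g d" if d: "d \<in> darts G" and pd: "?p \<in> traj ?f d" for d
  proof -
    obtain c where c: "c \<in> {?p, ?q}" "c \<in> traj ?f d" "c \<in> traj ?g d"
      using first_corner_reached[OF d _ pd] by blast
    have "c \<noteq> ?q"
    proof
      assume "c = ?q"
      then have "traj ?f ?q = traj ?f d" using traj_eq[OF perm] c(2) by blast
      then show False using sep pd by simp
    qed
    then show ?thesis using c by blast
  qed
  have p_fp: "?p \<in> traj ?g (?f ?p)"
    by (rule from_p[OF fS[OF a0_dart] traj_sym[OF perm step_in_traj]])
  have fp_q: "?f ?p \<in> traj ?g ?q"
    unfolding traj_iff by (rule exI[of _ 4]) (simp add: numeral_eq_Suc face_perm_new)
  have from_q: "?p \<in> traj ?g d" if d: "d \<in> darts G" and qd: "?q \<in> traj ?f d" for d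
  proof -
    obtain c where c: "c \<in> {?p, ?q}" "c \<in> traj ?g d"
      using first_corner_reached[OF d _ qd] by blast
    moreover have "?p \<in> traj ?g ?q" using traj_trans[OF fp_q p_fp] .
    ultimately show ?thesis using traj_trans[of ?q ?g d ?p] by blast
  qed
  have old: "?p \<in> traj ?g d" if "d \<in> darts G" for d
    using two that from_p from_q unfolding faces_hit_pair_iff by blast
  have "?p \<in> traj ?g d" if d: "d \<in> darts G'" for d
  proof (cases "d \<in> darts G")
    case False
    then show ?thesis
      using new_dart_reaches_old[OF d False] old[OF fS[OF a0_dart]] old[OF fS[OF b0_dart]]
        traj_trans[of _ ?g d ?p] by blast
  qed (use old in blast)
  then show ?thesis unfolding faces_hit_def by blast
qed

end

lemma face_representable':
  assumes rep: "face_representable G {(a1, a), (a2, a)}"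
    and a1: "a1 \<in> nbrs G a" and a2: "a2 \<in> nbrs G a"
  shows "face_representable G' {(x, y), (b, y)}"
proof -
  have N: "no_isolated G" and C: "connected_graph G" using rep unfolding face_representable_def by blast+
  obtain \<rho> where R: "rotation_system G \<rho>" and hit: "faces_hit G \<rho> {(a1, a), (a2, a)}"
    using rep unfolding face_representable_def by blast
  obtain b0 where b0: "b0 \<in> nbrs G b" using N b unfolding no_isolated_def by blast
  let ?f = "face_perm G \<rho>" and ?p1 = "(a1, a)" and ?p2 = "(a2, a)" and ?q = "(b0, b)"
  have perm: "permutation ?f" by (rule face_perm_permutation[OF G R])
  have q: "?q \<in> darts G" using b0 by (simp add: in_darts_iff in_nbrs_iff insert_commute)
  have "\<exists>\<rho>'. rotation_system G' \<rho>' \<and> faces_hit G' \<rho>' {(x, y), (b, y)}"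
  proof (cases "?p2 \<in> traj ?f ?p1")
    case True
    have "faces_hit G \<rho> {?p1, ?p1}"
      using faces_hit_pair_replace[OF hit traj_sym[OF perm True]] .
    then show ?thesis using rot'[OF R a1 b0] faces_hit_split[OF R a1 b0] by auto
  next
    case False
    obtain a0 where a0: "a0 \<in> nbrs G a" and sep: "(a0, a) \<notin> traj ?f ?q"
      and two: "faces_hit G \<rho> {(a0, a), ?q}"
    proof (cases "?p1 \<in> traj ?f ?q")
      case True
      have "faces_hit G \<rho> {?p2, ?q}"
        using faces_hit_pair_replace[OF hit[unfolded insert_commute[of ?p1]] traj_sym[OF perm True]] .
      moreover have "?p2 \<notin> traj ?f ?q" using False traj_eq[OF perm True] by simp
      ultimately show ?thesis using that[OF a2] by blast
    next
      case p1: False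
      then have "?p2 \<in> traj ?f ?q" using hit q unfolding faces_hit_pair_iff by blast
      then have "faces_hit G \<rho> {?p1, ?q}" using faces_hit_pair_replace[OF hit traj_sym[OF perm]] by blast
      then show ?thesis using that[OF a1 p1] by blast
    qed
    have "faces_hit G' (ear_rot \<rho> a a0 x y b b0) {(x, y)}"
    proof (rule faces_hit_singleton_move[OF simple' rot'[OF R a0 b0]])
      show "faces_hit G' (ear_rot \<rho> a a0 x y b b0) {(a0, a)}" by (rule faces_hit_merge[OF R a0 b0 sep two])
      show "(x, y) \<in> darts G'" unfolding darts' by simp
    qed
    then show ?thesis using rot'[OF R a0 b0] faces_hit_mono by blast
  qed
  then show ?thesis unfolding face_representable_def
    using simple' no_isolated'[OF N] connected'[OF C] by blast
qed

end

definition K2 :: "nat graph" where "K2 = ({1, 2}, {{1, 2}})"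

lemma face_representable_K2: "face_representable K2 {(1, 2)}"
proof -
  have V: "verts K2 = {1, 2}" and E: "edges K2 = {{1, 2}}" unfolding K2_def verts_def edges_def by simp_all
  have N: "nbrs K2 1 = {2}" "nbrs K2 2 = {1}"
    unfolding nbrs_def E by (auto simp: doubleton_eq_iff)
  have D: "darts K2 = {(1, 2), (2, 1)}" unfolding darts_def E by (auto simp: doubleton_eq_iff)
  have "simple_graph K2" unfolding simple_graph_def V E by simp
  moreover have "no_isolated K2" unfolding no_isolated_def V using N by auto
  moreover have "connected_graph K2"
  proof -
    have "(1, 2) \<in> adj K2" "(2, 1) \<in> adj K2" unfolding adj_def E by (auto simp: insert_commute)
    then show ?thesis unfolding connected_graph_iff_adj V by auto
  qed
  moreover have "rotation_system K2 (\<lambda>u. id)"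
    unfolding rotation_system_iff V using N by (simp add: cyclic_perm_on_singleton)
  moreover have "faces_hit K2 (\<lambda>u. id) {(1, 2)}"
  proof -
    have "face_perm K2 (\<lambda>u. id) (2, 1) = (1, 2)" unfolding face_perm_def face_step_def D by simp
    then have "(1, 2) \<in> traj (face_perm K2 (\<lambda>u. id)) (2, 1)" using step_in_traj by metis
    then show ?thesis unfolding faces_hit_def D using self_in_traj by auto
  qed
  ultimately show ?thesis unfolding face_representable_def by blast
qed

lemma betti_K2: "betti K2 = 0"
  unfolding betti_def K2_def verts_def edges_def by simp

lemma spiral5_edges_1_to_5: "{{i, i + 1} | i. 1 \<le> i \<and> i < (5::nat)} = {{1, 2}, {2, 3}, {3, 4}, {4, 5}}"
proof -
  have "{{i, i + 1} | i. 1 \<le> i \<and> i < (5::nat)} = (\<lambda>i. {i, i + 1}) ` {1..4}"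
    unfolding image_def by auto
  moreover have "{1..4::nat} = {1, 2, 3, 4}" by auto
  ultimately show ?thesis by (simp add: eval_nat_numeral)
qed

lemma spiral5_0: "spiral 5 0 = add_ear (add_leaf K2 2 3) 3 4 5 1"
proof -
  have v: "{1..5 + 2 * 0} = insert 3 {1, 2} \<union> {4, 5::nat}" by auto
  show ?thesis
    unfolding spiral_def add_ear_def add_leaf_def K2_def verts_def edges_def spiral5_edges_1_to_5
    by (simp only: prod.inject fst_conv snd_conv v) (rule conjI, rule refl, auto)
qed

lemma spiral5_Suc:
  "spiral 5 (Suc n) = add_ear (spiral 5 n) (5 + 2 * n) (6 + 2 * n) (7 + 2 * n) (spiral_end 5 (Suc n))"
proof -
  have v: "{1..7 + 2 * n} = {1..5 + 2 * n} \<union> {6 + 2 * n, 7 + 2 * n}" by auto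
  have u: "{1..Suc n} = insert (Suc n) {1..n}" by auto
  have n1: "5 + 2 * Suc n = 7 + 2 * n" "7 + 2 * n - 2 = 5 + 2 * n" "7 + 2 * n - 1 = 6 + 2 * n"
    by simp_all
  show ?thesis
    unfolding spiral_def add_ear_def verts_def edges_def
    by (simp only: prod.inject fst_conv snd_conv n1 v u UN_insert) blast
qed

lemma verts_spiral5: "verts (spiral 5 n) = {1..5 + 2 * n}"
  unfolding spiral_def verts_def by simp

text \<open>The last vertex 5 + 2n of the spiral is adjacent to 4 + 2n and to this vertex
  (to v1 on the initial 5-cycle).\<close>

definition last_nbr :: "nat \<Rightarrow> nat" where
  "last_nbr n = (if n = 0 then 1 else spiral_end 5 n)"

definition spiral5_reps :: "nat \<Rightarrow> (nat \<times> nat) set" where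
  "spiral5_reps n = {(4 + 2 * n, 5 + 2 * n), (last_nbr n, 5 + 2 * n)}"

lemma nbrs_last_vertex:
  "4 + 2 * n \<in> nbrs (spiral 5 n) (5 + 2 * n)" "last_nbr n \<in> nbrs (spiral 5 n) (5 + 2 * n)"
proof -
  have "{4 + 2 * n, 5 + 2 * n} \<in> edges (spiral 5 n) \<and> {5 + 2 * n, last_nbr n} \<in> edges (spiral 5 n)"
  proof (cases n)
    case 0
    then show ?thesis by (simp add: spiral5_0 last_nbr_def add_ear_def edges_def)
  next
    case (Suc m)
    then show ?thesis by (simp add: spiral5_Suc last_nbr_def add_ear_def edges_def)
  qed
  then show "4 + 2 * n \<in> nbrs (spiral 5 n) (5 + 2 * n)" "last_nbr n \<in> nbrs (spiral 5 n) (5 + 2 * n)"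
    by (simp_all add: in_nbrs_iff insert_commute)
qed

lemma spiral5_ear_ext:
  assumes "simple_graph (spiral 5 n)"
  shows "ear_ext (spiral 5 n) (5 + 2 * n) (6 + 2 * n) (7 + 2 * n) (spiral_end 5 (Suc n))"
proof -
  have "1 \<le> spiral_end 5 (Suc n)" "spiral_end 5 (Suc n) < 5 + 2 * n"
    unfolding spiral_end_def by auto
  then show ?thesis using assms unfolding ear_ext_def verts_spiral5 by auto
qed

lemma face_representable_spiral5: "face_representable (spiral 5 n) (spiral5_reps n)"
proof (induct n)
  case 0
  have "face_representable (add_leaf K2 2 3) {(1, 2)}"
    using add_leaf_preserves(1)[OF face_representable_K2] unfolding K2_def verts_def by simp
  then have G1: "face_representable (add_leaf K2 2 3) {(2, 3)}"
    by (rule face_representable_singleton_move) (simp add: darts_def add_leaf_def edges_def)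
  then have "simple_graph (add_leaf K2 2 3)" unfolding face_representable_def by blast
  then interpret ear_ext "add_leaf K2 2 3" 3 4 5 1
    unfolding ear_ext_def add_leaf_def K2_def verts_def by simp
  have "2 \<in> nbrs (add_leaf K2 2 3) 3" by (simp add: in_nbrs_iff add_leaf_def edges_def insert_commute)
  then have "face_representable (spiral 5 0) {(4, 5), (1, 5)}"
    unfolding spiral5_0 using face_representable'[of 2 2] G1 by simp
  then show ?case unfolding spiral5_reps_def last_nbr_def by simp
next
  case (Suc m)
  then have "simple_graph (spiral 5 m)" unfolding face_representable_def by blast
  then interpret ear_ext "spiral 5 m" "5 + 2 * m" "6 + 2 * m" "7 + 2 * m" "spiral_end 5 (Suc m)"
    by (rule spiral5_ear_ext)
  have "face_representable (spiral 5 (Suc m)) {(6 + 2 * m, 7 + 2 * m), (spiral_end 5 (Suc m), 7 + 2 * m)}"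
    unfolding spiral5_Suc using face_representable'[OF Suc[unfolded spiral5_reps_def] nbrs_last_vertex] .
  then show ?case unfolding spiral5_reps_def last_nbr_def by simp
qed

lemma betti_spiral5: "betti (spiral 5 n) = int n + 1"
proof (induct n)
  case 0
  have G1: "face_representable (add_leaf K2 2 3) {(1, 2)}" "betti (add_leaf K2 2 3) = 0"
    using add_leaf_preserves[OF face_representable_K2, of 2 3] betti_K2 by (simp_all add: K2_def verts_def)
  then have "simple_graph (add_leaf K2 2 3)" unfolding face_representable_def by blast
  then interpret ear_ext "add_leaf K2 2 3" 3 4 5 1
    unfolding ear_ext_def add_leaf_def K2_def verts_def by simp
  show ?case unfolding spiral5_0 betti' G1(2) by simp
next
  case (Suc m)
  have "simple_graph (spiral 5 m)" using face_representable_spiral5 unfolding face_representable_def by blast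
  then interpret ear_ext "spiral 5 m" "5 + 2 * m" "6 + 2 * m" "7 + 2 * m" "spiral_end 5 (Suc m)"
    by (rule spiral5_ear_ext)
  show ?case unfolding spiral5_Suc betti' Suc by simp
qed

lemma max_genus_spiral5: "max_genus (spiral 5 n) = (n + 1) div 2"
proof -
  have "{4 + 2 * n, 5 + 2 * n} \<in> edges (spiral 5 n)"
    using nbrs_last_vertex(1) by (simp add: in_nbrs_iff insert_commute)
  then have "edges (spiral 5 n) \<noteq> {}" by blast
  moreover have "card (spiral5_reps n) \<le> 2" unfolding spiral5_reps_def by (simp add: card_insert_le_m1)
  ultimately have "int (max_genus (spiral 5 n)) = int (n + 1) div 2"
    using max_genus_eq_half_betti[OF face_representable_spiral5] betti_spiral5
    unfolding spiral5_reps_def by simp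
  then show ?thesis by (simp add: zdiv_int)
qed

lemma delete_spiral5_1:
  "delete_vertex (spiral 5 1) 5 = add_leaf (add_leaf (add_leaf (add_leaf K2 2 3) 3 4) 1 7) 7 6"
proof -
  have S1: "spiral 5 1 = add_ear (add_ear (add_leaf K2 2 3) 3 4 5 1) 5 6 7 1"
    using spiral5_Suc[of 0] spiral5_0 by (simp add: spiral_end_def)
  have V: "verts (spiral 5 1) = {1, 2, 3, 4, 5, 6, 7}"
    unfolding S1 add_ear_def add_leaf_def K2_def verts_def by auto
  have E: "edges (spiral 5 1) = {{1, 2}, {2, 3}, {3, 4}, {4, 5}, {5, 1}, {5, 6}, {6, 7}, {7, 1}}"
    unfolding S1 add_ear_def add_leaf_def K2_def edges_def by (simp add: insert_commute)
  have E2: "{e \<in> edges (spiral 5 1). 5 \<notin> e} = {{1, 2}, {2, 3}, {3, 4}, {6, 7}, {7, 1}}"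
    unfolding E by auto
  have V5: "verts (spiral 5 1) - {5} = {1, 2, 3, 4, 6, 7}" unfolding V by auto
  show ?thesis
    unfolding delete_vertex_def V5 E2
    by (simp add: add_leaf_def K2_def verts_def edges_def insert_commute)
qed

lemma spiral5_Suc_Suc:
  "spiral 5 (Suc (Suc k)) = add_ear (add_ear (spiral 5 k) (5 + 2 * k) (6 + 2 * k) (7 + 2 * k)
      (spiral_end 5 (Suc k))) (7 + 2 * k) (8 + 2 * k) (9 + 2 * k) (spiral_end 5 (Suc (Suc k)))"
  using spiral5_Suc[of "Suc k"] spiral5_Suc[of k] by simp

lemma verts_delete_spiral5_Suc_Suc:
  "verts (spiral 5 (Suc (Suc k))) - {7 + 2 * k} =
    insert (8 + 2 * k) (insert (9 + 2 * k) (insert (6 + 2 * k) (verts (spiral 5 k))))"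
proof -
  have "7 + 2 * k \<notin> fst (spiral 5 k)" using verts_spiral5[of k] unfolding verts_def by simp
  then show ?thesis unfolding spiral5_Suc_Suc add_ear_def verts_def by auto
qed

lemma edges_delete_spiral5_Suc_Suc:
  "{e \<in> edges (spiral 5 (Suc (Suc k))). 7 + 2 * k \<notin> e} = insert {9 + 2 * k, 8 + 2 * k}
    (insert {spiral_end 5 (Suc (Suc k)), 9 + 2 * k} (insert {5 + 2 * k, 6 + 2 * k} (edges (spiral 5 k))))"
proof (rule set_eqI)
  fix e
  have "simple_graph (spiral 5 k)" using face_representable_spiral5 unfolding face_representable_def by blast
  moreover have "7 + 2 * k \<notin> verts (spiral 5 k)" unfolding verts_spiral5 by simp
  ultimately have old: "e \<in> edges (spiral 5 k) \<Longrightarrow> 7 + 2 * k \<notin> e" by (rule new_vertex_notin_edge)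
  have "spiral_end 5 (Suc k) \<noteq> 7 + 2 * k" "spiral_end 5 (Suc (Suc k)) \<noteq> 7 + 2 * k"
    unfolding spiral_end_def by auto
  then show "e \<in> {e \<in> edges (spiral 5 (Suc (Suc k))). 7 + 2 * k \<notin> e} \<longleftrightarrow> e \<in> insert {9 + 2 * k, 8 + 2 * k}
    (insert {spiral_end 5 (Suc (Suc k)), 9 + 2 * k} (insert {5 + 2 * k, 6 + 2 * k} (edges (spiral 5 k))))"
    using old unfolding spiral5_Suc_Suc add_ear_def edges_def by (auto simp: insert_commute)
qed

lemma delete_spiral5_Suc_Suc:
  "delete_vertex (spiral 5 (Suc (Suc k))) (7 + 2 * k) =
   add_leaf (add_leaf (add_leaf (spiral 5 k) (5 + 2 * k) (6 + 2 * k))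
     (spiral_end 5 (Suc (Suc k))) (9 + 2 * k)) (9 + 2 * k) (8 + 2 * k)"
  unfolding delete_vertex_def verts_delete_spiral5_Suc_Suc edges_delete_spiral5_Suc_Suc
  by (simp add: add_leaf_def verts_def edges_def)

lemma delete_spiral5_representable:
  assumes "n \<ge> 1"
  obtains Rs where "face_representable (delete_vertex (spiral 5 n) (2 * n + 3)) Rs" "finite Rs" "card Rs \<le> 2"
    "edges (delete_vertex (spiral 5 n) (2 * n + 3)) \<noteq> {}"
    "betti (delete_vertex (spiral 5 n) (2 * n + 3)) = int n - 1"
proof (cases "n = 1")
  case True
  let ?H1 = "add_leaf K2 2 3"
  let ?H2 = "add_leaf ?H1 3 4"
  let ?H3 = "add_leaf ?H2 1 7"
  have VK: "verts K2 = {1, 2}" unfolding K2_def verts_def by simp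
  have H1: "face_representable ?H1 {(1, 2)}" "betti ?H1 = 0"
    using add_leaf_preserves[OF face_representable_K2, of 2 3] betti_K2 VK by simp_all
  have H2: "face_representable ?H2 {(1, 2)}" "betti ?H2 = 0"
    using add_leaf_preserves[OF H1(1), of 3 4] H1(2) VK by (simp_all add: verts_add_leaf)
  have H3: "face_representable ?H3 {(1, 2)}" "betti ?H3 = 0"
    using add_leaf_preserves[OF H2(1), of 1 7] H2(2) VK by (simp_all add: verts_add_leaf)
  have H4: "face_representable (add_leaf ?H3 7 6) {(1, 2)}" "betti (add_leaf ?H3 7 6) = 0"
    using add_leaf_preserves[OF H3(1), of 7 6] H3(2) VK by (simp_all add: verts_add_leaf)
  have "delete_vertex (spiral 5 n) (2 * n + 3) = add_leaf ?H3 7 6" using True delete_spiral5_1 by simp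
  then show ?thesis using H4 True edges_add_leaf_ne by (intro that[of "{(1, 2)}"]) simp_all
next
  case False
  then obtain k where k: "n = Suc (Suc k)" using assms by (metis One_nat_def Suc_le_D le_SucE not_less_eq_eq)
  let ?S = "spiral 5 k" and ?b = "spiral_end 5 (Suc (Suc k))"
  let ?H1 = "add_leaf ?S (5 + 2 * k) (6 + 2 * k)"
  let ?H2 = "add_leaf ?H1 ?b (9 + 2 * k)"
  have b: "?b \<in> verts ?S" unfolding spiral_end_def verts_spiral5 by auto
  have H1: "face_representable ?H1 (spiral5_reps k)" "betti ?H1 = int k + 1"
    using add_leaf_preserves[OF face_representable_spiral5, of "5 + 2 * k" k "6 + 2 * k"] betti_spiral5[of k]
    by (simp_all add: verts_spiral5)
  have H2: "face_representable ?H2 (spiral5_reps k)" "betti ?H2 = int k + 1"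
    using add_leaf_preserves[OF H1(1), of ?b "9 + 2 * k"] H1(2) b by (simp_all add: verts_add_leaf verts_spiral5)
  have "face_representable (add_leaf ?H2 (9 + 2 * k) (8 + 2 * k)) (spiral5_reps k)"
    "betti (add_leaf ?H2 (9 + 2 * k) (8 + 2 * k)) = int k + 1"
    using add_leaf_preserves[OF H2(1), of "9 + 2 * k" "8 + 2 * k"] H2(2) by (simp_all add: verts_add_leaf verts_spiral5)
  moreover have "card (spiral5_reps k) \<le> 2" unfolding spiral5_reps_def by (simp add: card_insert_le_m1)
  moreover have "delete_vertex (spiral 5 n) (2 * n + 3) = add_leaf ?H2 (9 + 2 * k) (8 + 2 * k)"
    using k delete_spiral5_Suc_Suc by simp
  ultimately show ?thesis using k edges_add_leaf_ne
    by (intro that[of "spiral5_reps k"]) (simp_all add: spiral5_reps_def)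
qed

theorem theorem3p1:
  fixes n :: nat
  assumes "n \<ge> 1"
  shows "upper_embeddable (spiral 5 n) \<and>
         max_genus (spiral 5 n) = (n + 1) div 2 \<and>
         one_critical_vertex (spiral 5 n) (2 * n + 3)"
proof -
  let ?H = "delete_vertex (spiral 5 n) (2 * n + 3)"
  obtain Rs where rep: "face_representable ?H Rs" and Rs: "finite Rs" "card Rs \<le> 2"
    and E: "edges ?H \<noteq> {}" and betti_H: "betti ?H = int n - 1"
    by (rule delete_spiral5_representable[OF assms])
  have "int (max_genus ?H) = (int n - 1) div 2"
    using max_genus_eq_half_betti[OF rep Rs E] betti_H assms by simp
  also have "\<dots> = int (max_genus (spiral 5 n)) - 1"
    unfolding max_genus_spiral5 by (simp add: zdiv_int)
  moreover have "connected_graph ?H" using rep unfolding face_representable_def by blast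
  moreover have "2 * n + 3 \<in> verts (spiral 5 n)" unfolding verts_spiral5 by simp
  ultimately show ?thesis
    using max_genus_spiral5[of n] betti_spiral5[of n]
    unfolding upper_embeddable_def one_critical_vertex_def by (simp add: zdiv_int)
qed

end
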